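(* Let $\{X_t\}$ be a Geo-INAR(1) process with $\mu>0$ and $\alpha\in(0,\mu/(1+\mu))$, and let $\mu_\varepsilon=(1-\alpha)\mu$, $\sigma_\varepsilon^2=\mu_\varepsilon(1+\mu_\varepsilon)$. Then: (i) The one-step transition probabilities $p_{ij}=P(X_t=j\mid X_{t-1}=i)$ are, for all $j\ge0$, $p_{0j}=p_\varepsilon(j)$ and, for $i\ge1$, $$p_{ij}=p_\varepsilon(j)\Big[\pi_\star^{i}+\sum_{m=1}^{j}\sum_{l=1}^{m}\Big(1+\frac{1}{\mu_\varepsilon}\Big)^{m}A_l^i(\pi_\star)B_l^m(p)\Big],$$ where $p_\varepsilon(j)=\frac{\mu_\varepsilon^j}{(1+\mu_\varepsilon)^{j+1}}$, $\pi_\star=1-\frac{\alpha}{1+\mu_\varepsilon}$, $p=\frac{\mu_\varepsilon-\alpha}{1+\mu_\varepsilon-\alpha}$, $A_l^i(\pi_\star)=\binom{i+l-1}{l}\pi_\star^i(1-\pi_\star)^l$ and $B_l^m(p)=\binom{m-1}{l-1}p^{m-l}(1-p)^l$. (ii) $E(X_{t+1}\mid X_t)=\alpha X_t+(1-\alpha)\mu$. (iii) $\mathrm{Var}(X_{t+1}\mid X_t)=(1+2\mu)(1-\alpha)\alpha X_t+\sigma_\varepsilon^2$. (iv) $\mathrm{corr}(X_{t+h},X_t)=\alpha^h$ for all $h\in\mathbb N$.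
   Context: Geo-INAR(1) process: fix $\mu>0$, $\alpha\in(0,1)$, $\mu_\varepsilon=(1-\alpha)\mu$, $\pi=1-\alpha/\mu_\varepsilon$. Let $\{\varepsilon_t\}$ be i.i.d. $\mathrm{Geo}(\mu_\varepsilon)$ and, for each $t$, let $\{G_{t,i}\}_{i\ge1}$ be i.i.d. $\mathrm{ZMG}(\pi,\mu_\varepsilon)$, all mutually independent. The process satisfies $X_t=\sum_{i=1}^{X_{t-1}}G_{t,i}+\varepsilon_t$, $\varepsilon_t$ independent of $X_{t-h}$ for $h\ge1$, and $X_t\sim\mathrm{Geo}(\mu)$ for all $t$. $\mathrm{Geo}(m)$ has $P(k)=\frac{m^k}{(1+m)^{k+1}}$; $\mathrm{ZMG}(\pi,m)$ has $P(0)=\pi+\frac{1-\pi}{1+m}$, $P(k)=(1-\pi)\frac{m^k}{(1+m)^{k+1}}$, $k\ge1$. *)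

theory Defs
  imports "HOL-Probability.Probability"
begin

definition geo_prob :: "real \<Rightarrow> nat \<Rightarrow> real" where
  "geo_prob m k = m ^ k / (1 + m) ^ (k + 1)"

definition zmg_prob :: "real \<Rightarrow> real \<Rightarrow> nat \<Rightarrow> real" where
  "zmg_prob q m k = (if k = 0 then q + (1 - q) / (1 + m)
                      else (1 - q) * m ^ k / (1 + m) ^ (k + 1))"

text \<open>Index type for the independent building blocks of the process:
  the initial value X_0, the innovations eps_t and the counting series G_{t,i}.\<close>
datatype inar_idx = Init | Eps nat | Thin nat nat

definition inar_vars ::
  "(nat \<Rightarrow> 'a \<Rightarrow> nat) \<Rightarrow> (nat \<Rightarrow> 'a \<Rightarrow> nat) \<Rightarrow> (nat \<Rightarrow> nat \<Rightarrow> 'a \<Rightarrow> nat) \<Rightarrow> inar_idx \<Rightarrow> 'a \<Rightarrow> nat" where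
  "inar_vars X eps G k = (case k of Init \<Rightarrow> X 0 | Eps t \<Rightarrow> eps t | Thin t i \<Rightarrow> G t i)"

definition inar_index_set :: "inar_idx set" where
  "inar_index_set = {Init} \<union> {Eps t | t. t \<ge> 1} \<union> {Thin t i | t i. t \<ge> 1 \<and> i \<ge> 1}"

definition cond_expect_at :: "'a measure \<Rightarrow> ('a \<Rightarrow> real) \<Rightarrow> ('a \<Rightarrow> nat) \<Rightarrow> nat \<Rightarrow> real" where
  "cond_expect_at M Y X i =
     (\<integral>\<omega>. Y \<omega> * indicator {\<omega>\<in>space M. X \<omega> = i} \<omega> \<partial>M) / measure M {\<omega>\<in>space M. X \<omega> = i}"

definition cond_var_at :: "'a measure \<Rightarrow> ('a \<Rightarrow> real) \<Rightarrow> ('a \<Rightarrow> nat) \<Rightarrow> nat \<Rightarrow> real" where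
  "cond_var_at M Y X i = cond_expect_at M (\<lambda>\<omega>. (Y \<omega> - cond_expect_at M Y X i)\<^sup>2) X i"

definition covariance :: "'a measure \<Rightarrow> ('a \<Rightarrow> real) \<Rightarrow> ('a \<Rightarrow> real) \<Rightarrow> real" where
  "covariance M Y Z = (\<integral>\<omega>. (Y \<omega> - (\<integral>x. Y x \<partial>M)) * (Z \<omega> - (\<integral>x. Z x \<partial>M)) \<partial>M)"

definition correlation :: "'a measure \<Rightarrow> ('a \<Rightarrow> real) \<Rightarrow> ('a \<Rightarrow> real) \<Rightarrow> real" where
  "correlation M Y Z = covariance M Y Z / sqrt (covariance M Y Y * covariance M Z Z)"

end

theory Submission
  imports Defs
begin

text \<open>Given \<open>X\<^sub>t\<^sub>-\<^sub>1 = i\<close>, the recursion makes \<open>X\<^sub>t\<close> equal to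
  \<open>T\<^sub>i = G\<^sub>t\<^sub>,\<^sub>1 + \<dots> + G\<^sub>t\<^sub>,\<^sub>i + \<epsilon>\<^sub>t\<close>, a sum of variables independent of \<open>X\<^sub>0, \<dots>, X\<^sub>t\<^sub>-\<^sub>1\<close>.
  The ZMG law has generating function \<open>\<pi>\<^sub>\<star> (1 - p z) / (1 - q z)\<close> with \<open>q = \<mu>\<^sub>\<epsilon> / (1 + \<mu>\<^sub>\<epsilon>)\<close>,
  so the law of \<open>G\<^sub>t\<^sub>,\<^sub>1 + \<dots> + G\<^sub>t\<^sub>,\<^sub>i\<close> is the coefficient sequence of its \<open>i\<close>-th power. These
  coefficients are determined by a linear recurrence in \<open>(i, m)\<close> that the explicit double sum also
  satisfies; convolving with the geometric law of \<open>\<epsilon>\<^sub>t\<close> gives (i).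
  Means and variances add over the independent summands of \<open>T\<^sub>i\<close>, which gives (ii) and (iii).
  Splitting over the values of \<open>X\<^sub>t\<close> gives \<open>E(X\<^sub>t\<^sub>+\<^sub>1 X\<^sub>s) = \<alpha> E(X\<^sub>t X\<^sub>s) + \<mu>\<^sub>\<epsilon> \<mu>\<close> for
  \<open>s \<le> t\<close>, so the autocovariance at lag \<open>h\<close> is \<open>\<alpha>\<^sup>h \<mu> (1 + \<mu>)\<close>, and (iv) follows.\<close>

section \<open>Coefficients of powers of a rational generating function\<close>

definition pow_coeff_tail :: "real \<Rightarrow> real \<Rightarrow> nat \<Rightarrow> nat \<Rightarrow> real" where
  "pow_coeff_tail a p i n =
     (\<Sum>l\<le>n. real ((i + l) choose Suc l) * real (n choose l) * a ^ Suc l * p ^ (n - l))"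

definition pow_coeff_tail_step :: "real \<Rightarrow> real \<Rightarrow> nat \<Rightarrow> nat \<Rightarrow> real" where
  "pow_coeff_tail_step a p i n =
     (\<Sum>l\<le>n. real ((i + l) choose l) * real (n choose l) * a ^ Suc l * p ^ (n - l))"

text \<open>\<open>pow_coeff c a p i m\<close> is the coefficient of \<open>z\<^sup>m\<close> in \<open>(c (1 - p z) / (1 - (p + a) z))\<^sup>i\<close>;
  the recurrence below is the coefficient form of
  \<open>F\<^sub>i\<^sub>+\<^sub>1(z) (1 - (p + a) z) = c F\<^sub>i(z) (1 - p z)\<close>.\<close>
definition pow_coeff :: "real \<Rightarrow> real \<Rightarrow> real \<Rightarrow> nat \<Rightarrow> nat \<Rightarrow> real" where
  "pow_coeff c a p i m = (if m = 0 then c ^ i else c ^ i * pow_coeff_tail a p i (m - 1))"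

lemma pow_coeff_tail_Suc_left:
  "pow_coeff_tail a p (Suc i) n = pow_coeff_tail a p i n + pow_coeff_tail_step a p i n"
  unfolding pow_coeff_tail_def pow_coeff_tail_step_def sum.distrib[symmetric]
  by (intro sum.cong refl) (simp add: algebra_simps)

lemma pow_coeff_tail_step_Suc_right:
  "pow_coeff_tail_step a p i (Suc n) = p * pow_coeff_tail_step a p i n + a * pow_coeff_tail a p (Suc i) n"
proof -
  define f where "f l = real ((i + l) choose l) * a ^ Suc l * p ^ (Suc n - l)" for l
  have "pow_coeff_tail_step a p i (Suc n)
      = (\<Sum>l\<le>Suc n. real (n choose l) * f l) + (\<Sum>l\<le>Suc n. (if l = 0 then 0 else real (n choose (l - 1)) * f l))"
    unfolding pow_coeff_tail_step_def sum.distrib[symmetric]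
  proof (intro sum.cong refl)
    fix l show "real ((i + l) choose l) * real (Suc n choose l) * a ^ Suc l * p ^ (Suc n - l)
      = real (n choose l) * f l + (if l = 0 then 0 else real (n choose (l - 1)) * f l)"
      by (cases l) (simp_all add: f_def algebra_simps)
  qed
  also have "(\<Sum>l\<le>Suc n. real (n choose l) * f l) = p * pow_coeff_tail_step a p i n"
    unfolding pow_coeff_tail_step_def sum_distrib_left f_def
    by (simp add: Suc_diff_le binomial_eq_0 algebra_simps)
  also have "(\<Sum>l\<le>Suc n. (if l = 0 then 0 else real (n choose (l - 1)) * f l)) = a * pow_coeff_tail a p (Suc i) n"
    unfolding sum.atMost_Suc_shift pow_coeff_tail_def sum_distrib_left f_def
    by (simp add: algebra_simps)
  finally show ?thesis .
qed

lemma pow_coeff_tail_recurrence: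
  "pow_coeff_tail a p (Suc i) (Suc n) - (p + a) * pow_coeff_tail a p (Suc i) n
     = pow_coeff_tail a p i (Suc n) - p * pow_coeff_tail a p i n"
  by (simp add: pow_coeff_tail_Suc_left pow_coeff_tail_step_Suc_right algebra_simps)

lemma pow_coeff_0_right [simp]: "pow_coeff c a p i 0 = c ^ i"
  by (simp add: pow_coeff_def)

lemma pow_coeff_0_left: "pow_coeff c a p 0 m = (if m = 0 then 1 else 0)"
  by (simp add: pow_coeff_def pow_coeff_tail_def binomial_eq_0)

lemma pow_coeff_recurrence:
  "pow_coeff c a p (Suc i) (Suc m)
     = (p + a) * pow_coeff c a p (Suc i) m + c * (pow_coeff c a p i (Suc m) - p * pow_coeff c a p i m)"
proof (cases m)
  case 0
  then show ?thesis by (simp add: pow_coeff_def pow_coeff_tail_def algebra_simps)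
next
  case (Suc n)
  have "c ^ Suc i * (pow_coeff_tail a p (Suc i) (Suc n) - (p + a) * pow_coeff_tail a p (Suc i) n)
      = c * (c ^ i * (pow_coeff_tail a p i (Suc n) - p * pow_coeff_tail a p i n))"
    by (simp add: pow_coeff_tail_recurrence)
  then show ?thesis
    using Suc by (simp add: pow_coeff_def algebra_simps)
qed

lemma pow_coeff_eq_sum:
  assumes "m \<ge> 1"
  shows "pow_coeff c a p i m = (\<Sum>l = 1..m.
           real ((i + l - 1) choose l) * c ^ i * real ((m - 1) choose (l - 1)) * p ^ (m - l) * a ^ l)"
proof -
  obtain n where m: "m = Suc n" using assms by (cases m) auto
  have "(\<Sum>l = 1..m. real ((i + l - 1) choose l) * c ^ i * real ((m - 1) choose (l - 1)) * p ^ (m - l) * a ^ l)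
      = (\<Sum>l\<le>n. real ((i + l) choose Suc l) * c ^ i * real (n choose l) * p ^ (n - l) * a ^ Suc l)"
    unfolding m by (simp only: One_nat_def sum.shift_bounds_cl_Suc_ivl atLeast0AtMost) simp
  then show ?thesis
    unfolding pow_coeff_def pow_coeff_tail_def m by (simp add: sum_distrib_left algebra_simps)
qed

lemma convolution_recurrence:
  fixes h g :: "nat \<Rightarrow> real"
  assumes g0: "g 0 = c" and g1: "g 1 = c * (q - p)" and gSS: "\<And>k. g (Suc (Suc k)) = q * g (Suc k)"
  shows "(\<Sum>k\<le>Suc m. h k * g (Suc m - k)) = q * (\<Sum>k\<le>m. h k * g (m - k)) + c * (h (Suc m) - p * h m)"
proof -
  have g_step: "g (Suc m - k) = q * g (m - k) + (if k = m then c * (q - p) - q * c else 0)"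
    if "k \<le> m" for k
  proof (cases "k = m")
    case True
    then show ?thesis using g0 g1 by simp
  next
    case False
    then have "m - k = Suc (m - Suc k)" and "Suc m - k = Suc (Suc (m - Suc k))"
      using that by arith+
    then show ?thesis using False gSS by simp
  qed
  have "(\<Sum>k\<le>m. h k * g (Suc m - k))
      = (\<Sum>k\<le>m. q * (h k * g (m - k)) + (if k = m then h k * (c * (q - p) - q * c) else 0))"
    by (intro sum.cong refl) (simp add: g_step algebra_simps)
  also have "\<dots> = q * (\<Sum>k\<le>m. h k * g (m - k)) + h m * (c * (q - p) - q * c)"
    by (simp add: sum.distrib sum_distrib_left)
  finally show ?thesis by (simp add: g0 algebra_simps)
qed

lemma recurrence2_unique:
  fixes x y :: "nat \<Rightarrow> nat \<Rightarrow> real"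
  assumes "\<And>m. x 0 m = y 0 m" "\<And>i. x (Suc i) 0 = y (Suc i) 0"
    and "\<And>i m. x (Suc i) (Suc m) = q * x (Suc i) m + c * (x i (Suc m) - p * x i m)"
    and "\<And>i m. y (Suc i) (Suc m) = q * y (Suc i) m + c * (y i (Suc m) - p * y i m)"
  shows "x i m = y i m"
proof (induction i arbitrary: m)
  case 0
  then show ?case using assms(1) by simp
next
  case (Suc i)
  show ?case
    by (induction m) (simp_all add: assms(2-4) Suc.IH)
qed

text \<open>The conditions on \<open>g\<close> say that its generating function is \<open>c (1 - p z) / (1 - (p + a) z)\<close>.\<close>
lemma convolution_power_eq_pow_coeff:
  fixes h :: "nat \<Rightarrow> nat \<Rightarrow> real" and g :: "nat \<Rightarrow> real"
  assumes h0: "\<And>m. h 0 m = (if m = 0 then 1 else 0)"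
    and hSuc: "\<And>i m. h (Suc i) m = (\<Sum>k\<le>m. h i k * g (m - k))"
    and g0: "g 0 = c" and g1: "g 1 = c * a" and gSS: "\<And>k. g (Suc (Suc k)) = (p + a) * g (Suc k)"
  shows "h i m = pow_coeff c a p i m"
proof -
  have h_0: "h i 0 = c ^ i" for i
  proof (induction i)
    case (Suc i)
    then show ?case using hSuc[of i 0] g0 by simp
  qed (simp add: h0)
  show ?thesis
  proof (rule recurrence2_unique[where q = "p + a" and c = c and p = p])
    show "h 0 m = pow_coeff c a p 0 m" for m by (simp add: h0 pow_coeff_0_left)
    show "h (Suc i) 0 = pow_coeff c a p (Suc i) 0" for i by (simp add: h_0)
    show "h (Suc i) (Suc m) = (p + a) * h (Suc i) m + c * (h i (Suc m) - p * h i m)" for i m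
    proof -
      have "h (Suc i) (Suc m) = (\<Sum>k\<le>Suc m. h i k * g (Suc m - k))" by (rule hSuc)
      also have "\<dots> = (p + a) * (\<Sum>k\<le>m. h i k * g (m - k)) + c * (h i (Suc m) - p * h i m)"
        by (rule convolution_recurrence) (use g0 g1 gSS in simp_all)
      finally show ?thesis by (simp only: hSuc)
    qed
  qed (rule pow_coeff_recurrence)
qed

section \<open>Moments of the geometric and zero-modified geometric laws\<close>

lemma sums_Suc_mult_Suc_Suc_power:
  fixes z :: real
  assumes "\<bar>z\<bar> < 1"
  shows "(\<lambda>n. real (Suc n) * real (Suc (Suc n)) * z ^ n) sums (2 / (1 - z) ^ 3)"
proof -
  have z: "1 - z \<noteq> 0" using assms by auto
  have "(\<lambda>n. diffs (\<lambda>n. real (Suc n)) n * z ^ n) sums (2 / (1 - z) ^ 3)"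
  proof (rule termdiffs_sums_strong[where K = 1 and f = "\<lambda>z. 1 / (1 - z) ^ 2"])
    show "(\<lambda>n. real (Suc n) * w ^ n) sums (1 / (1 - w) ^ 2)" if "norm w < 1" for w :: real
      using geometric_deriv_sums[of w] that by simp
    show "((\<lambda>z. 1 / (1 - z) ^ 2) has_field_derivative 2 / (1 - z) ^ 3) (at z)"
      using z by (auto intro!: derivative_eq_intros simp: divide_simps eval_nat_numeral)
  qed (use assms in simp)
  then show ?thesis by (simp add: diffs_def)
qed

lemma sums_real_mult_power:
  fixes q :: real
  assumes "\<bar>q\<bar> < 1"
  shows "(\<lambda>n. real n * q ^ n) sums (q / (1 - q) ^ 2)"
proof -
  have "(\<lambda>n. real (Suc n) * q ^ n - q ^ n) sums (1 / (1 - q) ^ 2 - 1 / (1 - q))"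
    using geometric_deriv_sums[of q] geometric_sums[of q] assms by (intro sums_diff) simp_all
  moreover have "1 / (1 - q) ^ 2 - 1 / (1 - q) = q / (1 - q) ^ 2"
    using assms by (simp add: divide_simps power2_eq_square)
  ultimately show ?thesis by (simp add: algebra_simps)
qed

lemma sums_real_square_mult_power:
  fixes q :: real
  assumes "\<bar>q\<bar> < 1"
  shows "(\<lambda>n. (real n)\<^sup>2 * q ^ n) sums (q * (1 + q) / (1 - q) ^ 3)"
proof -
  have "(\<lambda>n. real (Suc n) * real (Suc (Suc n)) * q ^ n - 3 * (real (Suc n) * q ^ n) + q ^ n)
      sums (2 / (1 - q) ^ 3 - 3 * (1 / (1 - q) ^ 2) + 1 / (1 - q))"
    using sums_Suc_mult_Suc_Suc_power geometric_deriv_sums[of q] geometric_sums[of q] assms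
    by (intro sums_add sums_diff sums_mult) simp_all
  moreover have "2 / (1 - q) ^ 3 - 3 * (1 / (1 - q) ^ 2) + 1 / (1 - q) = q * (1 + q) / (1 - q) ^ 3"
    using assms by (simp add: divide_simps) (simp add: algebra_simps eval_nat_numeral)
  ultimately show ?thesis by (simp add: algebra_simps power2_eq_square)
qed

lemma geo_prob_eq_power: "geo_prob m k = (m / (1 + m)) ^ k / (1 + m)"
  unfolding geo_prob_def by (simp add: power_divide)

lemma geo_prob_pos: "m > 0 \<Longrightarrow> geo_prob m k > 0"
  unfolding geo_prob_def by simp

lemma geo_prob_sums_mean:
  assumes "m > 0"
  shows "(\<lambda>k. real k * geo_prob m k) sums m"
proof -
  have "\<bar>m / (1 + m)\<bar> < 1" using assms by simp
  from sums_divide[OF sums_real_mult_power[OF this], of "1 + m"]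
  show ?thesis using assms by (simp add: geo_prob_eq_power divide_simps power2_eq_square)
qed

lemma geo_prob_sums_second_moment:
  assumes "m > 0"
  shows "(\<lambda>k. (real k)\<^sup>2 * geo_prob m k) sums (m * (1 + 2 * m))"
proof -
  have "\<bar>m / (1 + m)\<bar> < 1" using assms by simp
  from sums_divide[OF sums_real_square_mult_power[OF this], of "1 + m"]
  show ?thesis using assms by (simp add: geo_prob_eq_power divide_simps power3_eq_cube) (simp add: algebra_simps)
qed

lemma geo_prob_mult_power:
  assumes "m > 0" "k \<le> j"
  shows "geo_prob m j * (1 + 1 / m) ^ k = geo_prob m (j - k)"
proof -
  obtain r where j: "j = k + r" using assms(2) le_Suc_ex by blast
  have "1 + 1 / m = (1 + m) / m" using assms(1) by (simp add: field_simps)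
  moreover have "geo_prob m (k + r) = (m / (1 + m)) ^ k * geo_prob m r"
    unfolding geo_prob_def by (simp add: power_add power_divide)
  moreover have "(m / (1 + m)) ^ k * ((1 + m) / m) ^ k = 1"
    using assms(1) by (simp add: power_mult_distrib[symmetric])
  ultimately show ?thesis unfolding j by (simp add: algebra_simps)
qed

lemma zmg_prob_eq_geo_prob: "k \<noteq> 0 \<Longrightarrow> zmg_prob q m k = (1 - q) * geo_prob m k"
  unfolding zmg_prob_def geo_prob_def by simp

lemma zmg_prob_sums_mean:
  assumes "m > 0"
  shows "(\<lambda>k. real k * zmg_prob q m k) sums ((1 - q) * m)"
proof -
  have "(\<lambda>k. real k * zmg_prob q m k) = (\<lambda>k. (1 - q) * (real k * geo_prob m k))"
    by (rule ext, case_tac "k = 0") (simp_all add: zmg_prob_eq_geo_prob)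
  then show ?thesis using sums_mult[OF geo_prob_sums_mean[OF assms]] by simp
qed

lemma zmg_prob_sums_second_moment:
  assumes "m > 0"
  shows "(\<lambda>k. (real k)\<^sup>2 * zmg_prob q m k) sums ((1 - q) * (m * (1 + 2 * m)))"
proof -
  have "(\<lambda>k. (real k)\<^sup>2 * zmg_prob q m k) = (\<lambda>k. (1 - q) * ((real k)\<^sup>2 * geo_prob m k))"
    by (rule ext, case_tac "k = 0") (simp_all add: zmg_prob_eq_geo_prob)
  then show ?thesis using sums_mult[OF geo_prob_sums_second_moment[OF assms]] by simp
qed

section \<open>Independence and conditioning\<close>

context prob_space
begin

lemma indep_var_cong:
  assumes "indep_var N1 U N2 W"
    and "\<And>\<omega>. \<omega> \<in> space M \<Longrightarrow> U \<omega> = U' \<omega>" "\<And>\<omega>. \<omega> \<in> space M \<Longrightarrow> W \<omega> = W' \<omega>"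
  shows "indep_var N1 U' N2 W'"
proof -
  have "U -` A \<inter> space M = U' -` A \<inter> space M" "W -` A \<inter> space M = W' -` A \<inter> space M" for A
    using assms(2,3) by auto
  moreover have "random_variable N1 U = random_variable N1 U'"
    by (rule measurable_cong) (simp add: assms(2))
  moreover have "random_variable N2 W = random_variable N2 W'"
    by (rule measurable_cong) (simp add: assms(3))
  ultimately show ?thesis using assms(1) unfolding indep_var_eq by simp
qed

lemma events_nat_rv_eq:
  fixes W :: "'a \<Rightarrow> nat"
  shows "W \<in> measurable M (count_space UNIV) \<Longrightarrow> {\<omega>\<in>space M. W \<omega> = k} \<in> events"
  by measurable

lemma prob_add_eq_convolution:
  fixes U W :: "'a \<Rightarrow> nat"
  assumes indep: "indep_var (count_space UNIV) U (count_space UNIV) W"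
  shows "prob {\<omega>\<in>space M. U \<omega> + W \<omega> = m}
           = (\<Sum>k\<le>m. prob {\<omega>\<in>space M. U \<omega> = k} * prob {\<omega>\<in>space M. W \<omega> = m - k})"
proof -
  define A where "A k = {\<omega>\<in>space M. U \<omega> = k \<and> W \<omega> = m - k}" for k
  have "A ` {..m} \<subseteq> events"
    using indep_var_rv1[OF indep] indep_var_rv2[OF indep] by (auto simp: A_def)
  moreover have "disjoint_family_on A {..m}"
    by (auto simp: disjoint_family_on_def A_def)
  moreover have "{\<omega>\<in>space M. U \<omega> + W \<omega> = m} = (\<Union>k\<le>m. A k)"
    by (auto simp: A_def)
  ultimately have "prob {\<omega>\<in>space M. U \<omega> + W \<omega> = m} = (\<Sum>k\<le>m. prob (A k))"
    by (simp add: finite_measure_finite_Union)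
  also have "\<dots> = (\<Sum>k\<le>m. prob {\<omega>\<in>space M. U \<omega> = k} * prob {\<omega>\<in>space M. W \<omega> = m - k})"
    using prob_indep_random_variable[OF indep, of "{k}" "{m - k}" for k] by (simp add: A_def)
  finally show ?thesis .
qed

lemma nn_integral_split_nat_rv:
  fixes W :: "'a \<Rightarrow> nat" and F :: "nat \<Rightarrow> 'a \<Rightarrow> ennreal"
  assumes W: "W \<in> measurable M (count_space UNIV)" and F: "\<And>i. F i \<in> borel_measurable M"
  shows "(\<integral>\<^sup>+\<omega>. F (W \<omega>) \<omega> \<partial>M) = (\<Sum>i. \<integral>\<^sup>+\<omega>. F i \<omega> * indicator {\<omega>\<in>space M. W \<omega> = i} \<omega> \<partial>M)"
proof -
  have "(\<Sum>i. F i \<omega> * indicator {\<omega>\<in>space M. W \<omega> = i} \<omega>) = F (W \<omega>) \<omega>" if "\<omega> \<in> space M" for \<omega>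
  proof -
    have "(\<Sum>i. F i \<omega> * indicator {\<omega>\<in>space M. W \<omega> = i} \<omega>)
        = (\<Sum>i\<in>{W \<omega>}. F i \<omega> * indicator {\<omega>\<in>space M. W \<omega> = i} \<omega>)"
      by (rule suminf_finite) (auto simp: indicator_def)
    then show ?thesis using that by simp
  qed
  then have "(\<integral>\<^sup>+\<omega>. F (W \<omega>) \<omega> \<partial>M) = (\<integral>\<^sup>+\<omega>. (\<Sum>i. F i \<omega> * indicator {\<omega>\<in>space M. W \<omega> = i} \<omega>) \<partial>M)"
    by (intro nn_integral_cong) simp
  also have "\<dots> = (\<Sum>i. \<integral>\<^sup>+\<omega>. F i \<omega> * indicator {\<omega>\<in>space M. W \<omega> = i} \<omega> \<partial>M)"
    using F events_nat_rv_eq[OF W] by (intro nn_integral_suminf) auto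
  finally show ?thesis .
qed

lemma nat_rv_expectation_sums:
  fixes W :: "'a \<Rightarrow> nat" and f :: "nat \<Rightarrow> real"
  assumes W: "W \<in> measurable M (count_space UNIV)" and f: "\<And>k. 0 \<le> f k"
    and sums: "(\<lambda>k. f k * prob {\<omega>\<in>space M. W \<omega> = k}) sums s"
  shows "integrable M (\<lambda>\<omega>. f (W \<omega>))" and "expectation (\<lambda>\<omega>. f (W \<omega>)) = s"
proof -
  have "(\<integral>\<^sup>+\<omega>. ennreal (f (W \<omega>)) \<partial>M) = (\<Sum>k. ennreal (f k * prob {\<omega>\<in>space M. W \<omega> = k}))"
    using nn_integral_split_nat_rv[OF W, of "\<lambda>k _. ennreal (f k)"] events_nat_rv_eq[OF W] f
    by (simp add: nn_integral_cmult_indicator emeasure_eq_measure ennreal_mult)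
  also have "\<dots> = ennreal s"
    using f sums by (intro suminf_ennreal_eq) auto
  finally have "(\<integral>\<^sup>+\<omega>. ennreal (f (W \<omega>)) \<partial>M) = ennreal s" .
  moreover have "0 \<le> s" using sums_le[OF _ sums_zero sums] f by simp
  moreover have "(\<lambda>\<omega>. f (W \<omega>)) \<in> borel_measurable M" using W by measurable
  ultimately show "integrable M (\<lambda>\<omega>. f (W \<omega>))" "expectation (\<lambda>\<omega>. f (W \<omega>)) = s"
    using nn_integral_eq_integrable f by blast+
qed

definition has_mean_variance :: "('a \<Rightarrow> real) \<Rightarrow> real \<Rightarrow> real \<Rightarrow> bool" where
  "has_mean_variance Y m v \<longleftrightarrow>
     integrable M Y \<and> integrable M (\<lambda>\<omega>. (Y \<omega>)\<^sup>2) \<and> expectation Y = m \<and> variance Y = v"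

lemma has_mean_varianceD:
  assumes "has_mean_variance Y m v"
  shows "integrable M Y" "integrable M (\<lambda>\<omega>. (Y \<omega>)\<^sup>2)"
    and "expectation Y = m" "expectation (\<lambda>\<omega>. (Y \<omega> - m)\<^sup>2) = v"
  using assms unfolding has_mean_variance_def by auto

lemma has_mean_variance_nat_rv:
  fixes W :: "'a \<Rightarrow> nat"
  assumes W: "W \<in> measurable M (count_space UNIV)"
    and mean: "(\<lambda>k. real k * prob {\<omega>\<in>space M. W \<omega> = k}) sums m"
    and second: "(\<lambda>k. (real k)\<^sup>2 * prob {\<omega>\<in>space M. W \<omega> = k}) sums m2"
  shows "has_mean_variance (\<lambda>\<omega>. real (W \<omega>)) m (m2 - m\<^sup>2)"
proof -
  have "integrable M (\<lambda>\<omega>. real (W \<omega>))" "expectation (\<lambda>\<omega>. real (W \<omega>)) = m"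
    and "integrable M (\<lambda>\<omega>. (real (W \<omega>))\<^sup>2)" "expectation (\<lambda>\<omega>. (real (W \<omega>))\<^sup>2) = m2"
    using nat_rv_expectation_sums[OF W _ mean] nat_rv_expectation_sums[OF W _ second] by simp_all
  then show ?thesis
    unfolding has_mean_variance_def using variance_eq[of "\<lambda>\<omega>. real (W \<omega>)"] by simp
qed

lemma nn_integral_indicator_mult_indep:
  fixes T Z :: "'a \<Rightarrow> real"
  assumes A: "A \<in> events"
    and T: "integrable M T" "\<And>\<omega>. 0 \<le> T \<omega>" and Z: "integrable M Z" "\<And>\<omega>. 0 \<le> Z \<omega>"
    and indep: "indep_var borel (\<lambda>\<omega>. indicator A \<omega> * Z \<omega>) borel T"
  shows "(\<integral>\<^sup>+\<omega>. ennreal (T \<omega> * Z \<omega>) * indicator A \<omega> \<partial>M)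
       = (\<integral>\<^sup>+\<omega>. ennreal (expectation T * Z \<omega>) * indicator A \<omega> \<partial>M)"
proof -
  have IZ: "integrable M (\<lambda>\<omega>. indicator A \<omega> * Z \<omega>)"
    using integrable_mult_indicator[OF A Z(1)] by simp
  have "0 \<le> expectation T" using T(2) by (simp add: integral_nonneg_AE)
  have "(\<integral>\<^sup>+\<omega>. ennreal (T \<omega> * Z \<omega>) * indicator A \<omega> \<partial>M)
      = (\<integral>\<^sup>+\<omega>. ennreal (indicator A \<omega> * Z \<omega> * T \<omega>) \<partial>M)"
    by (intro nn_integral_cong) (simp add: indicator_def mult.commute)
  also have "\<dots> = ennreal (\<integral>\<omega>. indicator A \<omega> * Z \<omega> * T \<omega> \<partial>M)"
    using indep_var_integrable[OF indep IZ T(1)] T(2) Z(2) by (intro nn_integral_eq_integral) auto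
  also have "\<dots> = ennreal (\<integral>\<omega>. expectation T * (indicator A \<omega> * Z \<omega>) \<partial>M)"
    using indep_var_lebesgue_integral[OF indep IZ T(1)] by (simp add: mult.commute)
  also have "\<dots> = (\<integral>\<^sup>+\<omega>. ennreal (expectation T * (indicator A \<omega> * Z \<omega>)) \<partial>M)"
    using IZ \<open>0 \<le> expectation T\<close> Z(2) by (intro nn_integral_eq_integral[symmetric]) auto
  also have "\<dots> = (\<integral>\<^sup>+\<omega>. ennreal (expectation T * Z \<omega>) * indicator A \<omega> \<partial>M)"
    by (intro nn_integral_cong) (simp add: indicator_def)
  finally show ?thesis .
qed

lemma integral_mixture_indep:
  fixes W :: "'a \<Rightarrow> nat" and T :: "nat \<Rightarrow> 'a \<Rightarrow> real" and Z :: "'a \<Rightarrow> real" and f :: "nat \<Rightarrow> real"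
  assumes W: "W \<in> measurable M (count_space UNIV)"
    and T: "\<And>i. integrable M (T i)" "\<And>i \<omega>. 0 \<le> T i \<omega>" "\<And>i. expectation (T i) = f i"
    and Z: "integrable M Z" "\<And>\<omega>. 0 \<le> Z \<omega>"
    and indep: "\<And>i. indep_var borel (\<lambda>\<omega>. indicator {\<omega>\<in>space M. W \<omega> = i} \<omega> * Z \<omega>) borel (T i)"
    and fWZ: "integrable M (\<lambda>\<omega>. f (W \<omega>) * Z \<omega>)"
  shows "integrable M (\<lambda>\<omega>. T (W \<omega>) \<omega> * Z \<omega>)"
    and "(\<integral>\<omega>. T (W \<omega>) \<omega> * Z \<omega> \<partial>M) = (\<integral>\<omega>. f (W \<omega>) * Z \<omega> \<partial>M)"
proof -
  have f0: "0 \<le> f i" for i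
    using integral_nonneg_AE[of "T i" M] T(2,3) by simp
  have piece: "(\<integral>\<^sup>+\<omega>. ennreal (T i \<omega> * Z \<omega>) * indicator {\<omega>\<in>space M. W \<omega> = i} \<omega> \<partial>M)
             = (\<integral>\<^sup>+\<omega>. ennreal (f i * Z \<omega>) * indicator {\<omega>\<in>space M. W \<omega> = i} \<omega> \<partial>M)" for i
    using nn_integral_indicator_mult_indep[OF events_nat_rv_eq[OF W] T(1,2) Z indep] T(3) by simp
  have Tm: "T i \<in> borel_measurable M" for i using T(1) by auto
  have Zm: "Z \<in> borel_measurable M" using Z(1) by auto
  have "(\<integral>\<^sup>+\<omega>. ennreal (T (W \<omega>) \<omega> * Z \<omega>) \<partial>M) = (\<integral>\<^sup>+\<omega>. ennreal (f (W \<omega>) * Z \<omega>) \<partial>M)"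
    using nn_integral_split_nat_rv[OF W, of "\<lambda>i \<omega>. ennreal (T i \<omega> * Z \<omega>)"]
      nn_integral_split_nat_rv[OF W, of "\<lambda>i \<omega>. ennreal (f i * Z \<omega>)"] Tm Zm
    by (simp add: piece)
  also have "\<dots> = ennreal (\<integral>\<omega>. f (W \<omega>) * Z \<omega> \<partial>M)"
    using fWZ f0 Z(2) by (intro nn_integral_eq_integral) auto
  finally have nn: "(\<integral>\<^sup>+\<omega>. ennreal (T (W \<omega>) \<omega> * Z \<omega>) \<partial>M) = ennreal (\<integral>\<omega>. f (W \<omega>) * Z \<omega> \<partial>M)" .
  have "(\<lambda>\<omega>. T (W \<omega>) \<omega> * Z \<omega>) \<in> borel_measurable M"
    using measurable_compose_countable[OF Tm W] Zm by measurable
  moreover have "AE \<omega> in M. 0 \<le> T (W \<omega>) \<omega> * Z \<omega>"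
    using T(2) Z(2) by simp
  moreover have "0 \<le> (\<integral>\<omega>. f (W \<omega>) * Z \<omega> \<partial>M)"
    using f0 Z(2) by (simp add: integral_nonneg_AE)
  ultimately have "integrable M (\<lambda>\<omega>. T (W \<omega>) \<omega> * Z \<omega>)
      \<and> (\<integral>\<omega>. T (W \<omega>) \<omega> * Z \<omega> \<partial>M) = (\<integral>\<omega>. f (W \<omega>) * Z \<omega> \<partial>M)"
    using nn by (simp add: nn_integral_eq_integrable)
  then show "integrable M (\<lambda>\<omega>. T (W \<omega>) \<omega> * Z \<omega>)"
    and "(\<integral>\<omega>. T (W \<omega>) \<omega> * Z \<omega> \<partial>M) = (\<integral>\<omega>. f (W \<omega>) * Z \<omega> \<partial>M)"
    by blast+
qed

lemma cond_expect_at_indep: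
  fixes W T :: "'a \<Rightarrow> nat" and \<phi> :: "nat \<Rightarrow> real" and V :: "'a \<Rightarrow> real"
  assumes indep: "indep_var (count_space UNIV) W (count_space UNIV) T"
    and int: "integrable M (\<lambda>\<omega>. \<phi> (T \<omega>))"
    and pos: "prob {\<omega>\<in>space M. W \<omega> = i} \<noteq> 0"
    and V: "\<And>\<omega>. \<omega> \<in> space M \<Longrightarrow> W \<omega> = i \<Longrightarrow> V \<omega> = \<phi> (T \<omega>)"
  shows "cond_expect_at M V W i = expectation (\<lambda>\<omega>. \<phi> (T \<omega>))"
proof -
  define A where "A = {\<omega>\<in>space M. W \<omega> = i}"
  have A: "A \<in> events" unfolding A_def using events_nat_rv_eq[OF indep_var_rv1[OF indep]] .
  have "indep_var borel ((\<lambda>n. if n = i then 1 else 0 :: real) \<circ> W) borel (\<phi> \<circ> T)"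
    by (rule indep_var_compose[OF indep]) simp_all
  then have indep_A: "indep_var borel (indicator A :: 'a \<Rightarrow> real) borel (\<lambda>\<omega>. \<phi> (T \<omega>))"
    by (rule indep_var_cong) (auto simp: A_def indicator_def)
  have "(\<integral>\<omega>. V \<omega> * indicator A \<omega> \<partial>M) = (\<integral>\<omega>. indicator A \<omega> * \<phi> (T \<omega>) \<partial>M)"
    by (intro Bochner_Integration.integral_cong) (auto simp: A_def indicator_def V)
  also have "\<dots> = prob A * expectation (\<lambda>\<omega>. \<phi> (T \<omega>))"
    using indep_var_lebesgue_integral[OF indep_A _ int] A by (simp add: less_top[symmetric])
  finally show ?thesis
    using pos unfolding cond_expect_at_def A_def[symmetric] by simp
qed

lemma covariance_eq:
  fixes U V :: "'a \<Rightarrow> real"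
  assumes "integrable M U" "integrable M V" "integrable M (\<lambda>\<omega>. U \<omega> * V \<omega>)"
  shows "covariance M U V = expectation (\<lambda>\<omega>. U \<omega> * V \<omega>) - expectation U * expectation V"
proof -
  have "(\<lambda>\<omega>. (U \<omega> - expectation U) * (V \<omega> - expectation V))
      = (\<lambda>\<omega>. U \<omega> * V \<omega> - expectation V * U \<omega> - (expectation U * V \<omega> - expectation U * expectation V))"
    by (auto simp: algebra_simps)
  then show ?thesis
    unfolding covariance_def using assms by (simp add: prob_space)
qed

lemma has_mean_variance_add_indep:
  fixes U V :: "'a \<Rightarrow> real"
  assumes indep: "indep_var borel U borel V"
    and U: "has_mean_variance U m v" and V: "has_mean_variance V m' v'"
  shows "has_mean_variance (\<lambda>\<omega>. U \<omega> + V \<omega>) (m + m') (v + v')"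
proof -
  note U = has_mean_varianceD[OF U] and V = has_mean_varianceD[OF V]
  have sq: "(U \<omega> + V \<omega>)\<^sup>2 = (U \<omega>)\<^sup>2 + 2 * (U \<omega> * V \<omega>) + (V \<omega>)\<^sup>2" for \<omega>
    by (simp add: power2_eq_square algebra_simps)
  have UV: "integrable M (\<lambda>\<omega>. U \<omega> * V \<omega>)" "expectation (\<lambda>\<omega>. U \<omega> * V \<omega>) = m * m'"
    using indep_var_integrable[OF indep] indep_var_lebesgue_integral[OF indep] U V by simp_all
  have int: "integrable M (\<lambda>\<omega>. (U \<omega> + V \<omega>)\<^sup>2)"
    unfolding sq using U V UV by simp
  have E2: "expectation (\<lambda>\<omega>. (U \<omega> + V \<omega>)\<^sup>2)
      = expectation (\<lambda>\<omega>. (U \<omega>)\<^sup>2) + 2 * (m * m') + expectation (\<lambda>\<omega>. (V \<omega>)\<^sup>2)"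
    unfolding sq using U V UV by simp
  have vU: "v = expectation (\<lambda>\<omega>. (U \<omega>)\<^sup>2) - m\<^sup>2" and vV: "v' = expectation (\<lambda>\<omega>. (V \<omega>)\<^sup>2) - m'\<^sup>2"
    using variance_eq[of U] variance_eq[of V] U V by simp_all
  have "variance (\<lambda>\<omega>. U \<omega> + V \<omega>) = expectation (\<lambda>\<omega>. (U \<omega> + V \<omega>)\<^sup>2) - (m + m')\<^sup>2"
    using variance_eq[of "\<lambda>\<omega>. U \<omega> + V \<omega>"] int U V by simp
  also have "\<dots> = v + v'"
    unfolding E2 vU vV by (simp add: power2_eq_square algebra_simps)
  finally show ?thesis
    unfolding has_mean_variance_def using int U V by simp
qed

end

lemma measurable_sum_add_nat:
  fixes f :: "'i \<Rightarrow> 'b \<Rightarrow> nat"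
  assumes "finite S" "\<And>i. i \<in> S \<Longrightarrow> f i \<in> measurable N (count_space UNIV)"
    and "g \<in> measurable N (count_space UNIV)"
  shows "(\<lambda>x. (\<Sum>i\<in>S. f i x) + g x) \<in> measurable N (count_space UNIV)"
  using assms by measurable

section \<open>The Geo-INAR(1) process\<close>

fun idx_time :: "inar_idx \<Rightarrow> nat" where
  "idx_time Init = 0"
| "idx_time (inar_idx.Eps t) = t"
| "idx_time (Thin t i) = t"

definition past_idx :: "nat \<Rightarrow> inar_idx set" where
  "past_idx s = {k \<in> inar_index_set. idx_time k \<le> s}"

definition step_idx :: "nat \<Rightarrow> nat \<Rightarrow> inar_idx set" where
  "step_idx t n = insert (inar_idx.Eps t) (Thin t ` {1..n})"

lemma past_idx_iff [simp]:
  "Init \<in> past_idx s"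
  "inar_idx.Eps t \<in> past_idx s \<longleftrightarrow> 1 \<le> t \<and> t \<le> s"
  "Thin t i \<in> past_idx s \<longleftrightarrow> 1 \<le> t \<and> 1 \<le> i \<and> t \<le> s"
  by (auto simp: past_idx_def inar_index_set_def)

lemma past_idx_mono: "s \<le> s' \<Longrightarrow> past_idx s \<subseteq> past_idx s'"
  by (auto simp: past_idx_def)

lemma past_idx_subset: "past_idx s \<subseteq> inar_index_set"
  by (auto simp: past_idx_def)

lemma step_idx_subset: "t \<ge> 1 \<Longrightarrow> step_idx t n \<subseteq> inar_index_set"
  by (auto simp: step_idx_def inar_index_set_def)

lemma past_idx_step_idx_disjoint: "past_idx s \<inter> step_idx (Suc s) n = {}"
  by (auto simp: past_idx_def step_idx_def)

fun path_of_blocks :: "nat \<Rightarrow> (inar_idx \<Rightarrow> nat) \<Rightarrow> nat" where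
  "path_of_blocks 0 y = y Init"
| "path_of_blocks (Suc s) y = (\<Sum>i = 1..path_of_blocks s y. y (Thin (Suc s) i)) + y (inar_idx.Eps (Suc s))"

lemma path_of_blocks_cong:
  "(\<And>k. k \<in> past_idx s \<Longrightarrow> y k = z k) \<Longrightarrow> path_of_blocks s y = path_of_blocks s z"
proof (induction s)
  case (Suc s)
  then have "path_of_blocks s y = path_of_blocks s z"
    using past_idx_mono[of s "Suc s"] by (metis le_SucI order_refl subsetD)
  with Suc.prems show ?case by (auto intro!: sum.cong)
qed simp

lemma measurable_path_of_blocks:
  assumes "past_idx s \<subseteq> K"
  shows "path_of_blocks s \<in> measurable (PiM K (\<lambda>_. count_space UNIV)) (count_space UNIV)"
  using assms
proof (induction s)
  case 0
  then have "Init \<in> K" by auto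
  then show ?case by simp measurable
next
  case (Suc s)
  have "(\<lambda>y. (\<lambda>n. (\<Sum>i = 1..n. y (Thin (Suc s) i)) + y (inar_idx.Eps (Suc s))) (path_of_blocks s y))
      \<in> measurable (PiM K (\<lambda>_. count_space UNIV)) (count_space UNIV)"
  proof (rule measurable_compose_countable[where g = "path_of_blocks s"])
    show "path_of_blocks s \<in> measurable (PiM K (\<lambda>_. count_space UNIV)) (count_space UNIV)"
      using Suc past_idx_mono[of s "Suc s"] by simp
    have component: "(\<lambda>y. y k) \<in> measurable (PiM K (\<lambda>_. count_space UNIV)) (count_space UNIV)"
      if "k \<in> past_idx (Suc s)" for k
      using that Suc.prems by (intro measurable_component_singleton) auto
    show "(\<lambda>y :: inar_idx \<Rightarrow> nat. (\<Sum>i = 1..n. y (Thin (Suc s) i)) + y (inar_idx.Eps (Suc s)))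
        \<in> measurable (PiM K (\<lambda>_. count_space UNIV)) (count_space UNIV)" for n
      by (rule measurable_sum_add_nat) (auto intro: component)
  qed
  then show ?case by simp
qed

locale geo_inar = prob_space M
  for M :: "'a measure"
    and X :: "nat \<Rightarrow> 'a \<Rightarrow> nat"
    and eps :: "nat \<Rightarrow> 'a \<Rightarrow> nat"
    and G :: "nat \<Rightarrow> nat \<Rightarrow> 'a \<Rightarrow> nat"
    and \<mu> \<alpha> \<mu>\<^sub>\<epsilon> \<pi>\<^sub>0 :: real +
  assumes mu_pos: "\<mu> > 0"
    and alpha_pos: "0 < \<alpha>" and alpha_bound: "\<alpha> < \<mu> / (1 + \<mu>)"
    and rv_X: "\<And>t. X t \<in> measurable M (count_space UNIV)"
    and rv_eps: "\<And>t. eps t \<in> measurable M (count_space UNIV)"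
    and rv_G: "\<And>t i. G t i \<in> measurable M (count_space UNIV)"
    and indep: "indep_vars (\<lambda>_. count_space UNIV) (inar_vars X eps G) inar_index_set"
    and dist_eps: "\<And>t k. t \<ge> 1 \<Longrightarrow> prob {\<omega>\<in>space M. eps t \<omega> = k} = geo_prob \<mu>\<^sub>\<epsilon> k"
    and dist_G: "\<And>t i k. t \<ge> 1 \<Longrightarrow> i \<ge> 1 \<Longrightarrow> prob {\<omega>\<in>space M. G t i \<omega> = k} = zmg_prob \<pi>\<^sub>0 \<mu>\<^sub>\<epsilon> k"
    and recursion: "\<And>t \<omega>. t \<ge> 1 \<Longrightarrow> \<omega> \<in> space M \<Longrightarrow>
                   X t \<omega> = (\<Sum>i = 1..X (t - 1) \<omega>. G t i \<omega>) + eps t \<omega>"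
    and dist_X: "\<And>t k. prob {\<omega>\<in>space M. X t \<omega> = k} = geo_prob \<mu> k"
    and mu_eps_def: "\<mu>\<^sub>\<epsilon> = (1 - \<alpha>) * \<mu>"
    and pi0_def: "\<pi>\<^sub>0 = 1 - \<alpha> / \<mu>\<^sub>\<epsilon>"
begin

lemma alpha_lt_mu_eps: "\<alpha> < \<mu>\<^sub>\<epsilon>"
proof -
  have "\<alpha> * (1 + \<mu>) < \<mu>" using alpha_bound mu_pos by (simp add: field_simps)
  then show ?thesis unfolding mu_eps_def by (simp add: algebra_simps)
qed

lemma mu_eps_pos: "\<mu>\<^sub>\<epsilon> > 0"
  using alpha_lt_mu_eps alpha_pos by linarith

lemma prob_X_pos: "prob {\<omega>\<in>space M. X t \<omega> = i} > 0"
  using dist_X geo_prob_pos mu_pos by simp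

definition blocks :: "inar_idx set \<Rightarrow> 'a \<Rightarrow> inar_idx \<Rightarrow> nat" where
  "blocks A \<omega> = restrict (\<lambda>k. inar_vars X eps G k \<omega>) A"

lemma indep_var_blocks:
  assumes "A \<inter> B = {}" "A \<subseteq> inar_index_set" "B \<subseteq> inar_index_set"
    and "h \<in> measurable (PiM A (\<lambda>_. count_space UNIV)) N1"
    and "F \<in> measurable (PiM B (\<lambda>_. count_space UNIV)) N2"
  shows "indep_var N1 (\<lambda>\<omega>. h (blocks A \<omega>)) N2 (\<lambda>\<omega>. F (blocks B \<omega>))"
proof -
  have "indep_var (PiM A (\<lambda>_. count_space UNIV)) (blocks A) (PiM B (\<lambda>_. count_space UNIV)) (blocks B)"
    unfolding blocks_def[abs_def] by (rule indep_var_restrict[OF indep assms(1-3)])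
  from indep_var_compose[OF this assms(4,5)] show ?thesis by (simp add: comp_def)
qed

lemma X_eq_path_of_blocks:
  assumes "\<omega> \<in> space M" "past_idx s \<subseteq> A"
  shows "X s \<omega> = path_of_blocks s (blocks A \<omega>)"
proof -
  have "X s \<omega> = path_of_blocks s (\<lambda>k. inar_vars X eps G k \<omega>)"
    using assms(1) recursion[of _ \<omega>] by (induction s) (simp_all add: inar_vars_def)
  also have "\<dots> = path_of_blocks s (blocks A \<omega>)"
    using assms(2) by (intro path_of_blocks_cong) (auto simp: blocks_def)
  finally show ?thesis .
qed

definition "\<pi>star = 1 - \<alpha> / (1 + \<mu>\<^sub>\<epsilon>)"
definition "p = (\<mu>\<^sub>\<epsilon> - \<alpha>) / (1 + \<mu>\<^sub>\<epsilon> - \<alpha>)"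

text \<open>The ZMG law has generating function \<open>\<pi>star (1 - p z) / (1 - (p + a) z)\<close> with
  \<open>p + a = \<mu>\<^sub>\<epsilon> / (1 + \<mu>\<^sub>\<epsilon>)\<close>.\<close>
definition "a = (1 - \<pi>star) * (1 - p)"

lemma p_plus_a: "p + a = \<mu>\<^sub>\<epsilon> / (1 + \<mu>\<^sub>\<epsilon>)"
proof -
  have "1 + \<mu>\<^sub>\<epsilon> \<noteq> 0" "1 + \<mu>\<^sub>\<epsilon> - \<alpha> \<noteq> 0" using alpha_lt_mu_eps mu_eps_pos by auto
  then show ?thesis unfolding a_def \<pi>star_def p_def by (simp add: divide_simps) (simp add: algebra_simps)
qed

lemma zmg_prob_0: "zmg_prob \<pi>\<^sub>0 \<mu>\<^sub>\<epsilon> 0 = \<pi>star"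
  using mu_eps_pos unfolding zmg_prob_def pi0_def \<pi>star_def by (simp add: divide_simps) (simp add: algebra_simps)

lemma zmg_prob_1: "zmg_prob \<pi>\<^sub>0 \<mu>\<^sub>\<epsilon> 1 = \<pi>star * a"
proof -
  have "\<mu>\<^sub>\<epsilon> \<noteq> 0" "1 + \<mu>\<^sub>\<epsilon> \<noteq> 0" "1 + \<mu>\<^sub>\<epsilon> - \<alpha> \<noteq> 0" using alpha_lt_mu_eps mu_eps_pos by auto
  then show ?thesis unfolding zmg_prob_def pi0_def \<pi>star_def a_def p_def
    by (simp add: divide_simps)
qed

lemma zmg_prob_Suc_Suc: "zmg_prob \<pi>\<^sub>0 \<mu>\<^sub>\<epsilon> (Suc (Suc k)) = (p + a) * zmg_prob \<pi>\<^sub>0 \<mu>\<^sub>\<epsilon> (Suc k)"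
  using mu_eps_pos unfolding zmg_prob_def p_plus_a by (simp add: field_simps)

definition thin_sum :: "nat \<Rightarrow> nat \<Rightarrow> 'a \<Rightarrow> nat" where
  "thin_sum t n \<omega> = (\<Sum>i = 1..n. G t i \<omega>)"

text \<open>\<open>step_value t n\<close> is the value of \<open>X\<^sub>t\<close> on the event \<open>X\<^sub>t\<^sub>-\<^sub>1 = n\<close>.\<close>
definition step_value :: "nat \<Rightarrow> nat \<Rightarrow> 'a \<Rightarrow> nat" where
  "step_value t n \<omega> = thin_sum t n \<omega> + eps t \<omega>"

lemma X_Suc_eq_step_value: "\<omega> \<in> space M \<Longrightarrow> X (Suc s) \<omega> = step_value (Suc s) (X s \<omega>) \<omega>"
  using recursion[of "Suc s" \<omega>] by (simp add: step_value_def thin_sum_def)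

lemma step_value_eq_blocks:
  "step_value t n \<omega> = (\<lambda>y. (\<Sum>i = 1..n. y (Thin t i)) + y (inar_idx.Eps t)) (blocks (step_idx t n) \<omega>)"
  unfolding step_value_def thin_sum_def blocks_def by (auto simp: step_idx_def inar_vars_def intro!: sum.cong)

lemma measurable_step_value_of_blocks:
  "(\<lambda>y :: inar_idx \<Rightarrow> nat. (\<Sum>i = 1..n. y (Thin t i)) + y (inar_idx.Eps t))
     \<in> measurable (PiM (step_idx t n) (\<lambda>_. count_space UNIV)) (count_space UNIV)"
  by (rule measurable_sum_add_nat) (auto simp: step_idx_def)

lemma indep_thin_sum_G:
  assumes "t \<ge> 1"
  shows "indep_var (count_space UNIV) (thin_sum t n) (count_space UNIV) (G t (Suc n))"
proof -
  have "indep_var (count_space UNIV) (\<lambda>\<omega>. (\<lambda>y. \<Sum>i = 1..n. y (Thin t i)) (blocks (Thin t ` {1..n}) \<omega>))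
      (count_space UNIV) (\<lambda>\<omega>. (\<lambda>y. y (Thin t (Suc n))) (blocks {Thin t (Suc n)} \<omega>))"
    using assms by (intro indep_var_blocks) (auto simp: inar_index_set_def)
  then show ?thesis
    by (simp add: thin_sum_def[abs_def] blocks_def inar_vars_def)
qed

lemma indep_thin_sum_eps:
  assumes "t \<ge> 1"
  shows "indep_var (count_space UNIV) (thin_sum t n) (count_space UNIV) (eps t)"
proof -
  have "indep_var (count_space UNIV) (\<lambda>\<omega>. (\<lambda>y. \<Sum>i = 1..n. y (Thin t i)) (blocks (Thin t ` {1..n}) \<omega>))
      (count_space UNIV) (\<lambda>\<omega>. (\<lambda>y. y (inar_idx.Eps t)) (blocks {inar_idx.Eps t} \<omega>))"
    using assms by (intro indep_var_blocks) (auto simp: inar_index_set_def)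
  then show ?thesis
    by (simp add: thin_sum_def[abs_def] blocks_def inar_vars_def)
qed

lemma indep_past_step_value:
  assumes "h \<in> measurable (PiM (past_idx s) (\<lambda>_. count_space UNIV)) N"
    and "F \<in> measurable (count_space UNIV) N'"
  shows "indep_var N (\<lambda>\<omega>. h (blocks (past_idx s) \<omega>)) N' (\<lambda>\<omega>. F (step_value (Suc s) n \<omega>))"
  unfolding step_value_eq_blocks
  by (intro indep_var_blocks assms(1) measurable_compose[OF measurable_step_value_of_blocks assms(2)]
      past_idx_step_idx_disjoint past_idx_subset step_idx_subset) simp

lemma indep_X_step_value: "indep_var (count_space UNIV) (X s) (count_space UNIV) (step_value (Suc s) n)"
  by (rule indep_var_cong[OF indep_past_step_value[OF measurable_path_of_blocks[OF order_refl] measurable_ident]])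
    (simp_all add: X_eq_path_of_blocks[OF _ order_refl])

lemma indep_X_indicator_step_value:
  assumes "t \<le> s"
  shows "indep_var borel (\<lambda>\<omega>. indicator {\<omega>\<in>space M. X s \<omega> = i} \<omega> * real (X t \<omega>))
           borel (\<lambda>\<omega>. real (step_value (Suc s) n \<omega>))"
proof -
  define h where "h y = (if path_of_blocks s y = i then 1 else 0) * real (path_of_blocks t y)"
    for y :: "inar_idx \<Rightarrow> nat"
  have "h \<in> borel_measurable (PiM (past_idx s) (\<lambda>_. count_space UNIV))"
    using measurable_path_of_blocks[OF order_refl, of s]
      measurable_path_of_blocks[OF past_idx_mono[OF assms]]
    unfolding h_def by measurable
  then have "indep_var borel (\<lambda>\<omega>. h (blocks (past_idx s) \<omega>)) borel (\<lambda>\<omega>. real (step_value (Suc s) n \<omega>))"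
    by (rule indep_past_step_value) simp
  then show ?thesis
  proof (rule indep_var_cong)
    fix \<omega> assume "\<omega> \<in> space M"
    then have "X s \<omega> = path_of_blocks s (blocks (past_idx s) \<omega>)"
      and "X t \<omega> = path_of_blocks t (blocks (past_idx s) \<omega>)"
      using X_eq_path_of_blocks past_idx_mono[OF assms] by auto
    then show "h (blocks (past_idx s) \<omega>) = indicator {\<omega>\<in>space M. X s \<omega> = i} \<omega> * real (X t \<omega>)"
      using \<open>\<omega> \<in> space M\<close> by (simp add: h_def indicator_def)
  qed simp
qed

lemma prob_thin_sum:
  assumes "t \<ge> 1"
  shows "prob {\<omega>\<in>space M. thin_sum t n \<omega> = m} = pow_coeff \<pi>star a p n m"
proof (rule convolution_power_eq_pow_coeff[where h = "\<lambda>n m. prob {\<omega>\<in>space M. thin_sum t n \<omega> = m}"])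
  show "prob {\<omega>\<in>space M. thin_sum t 0 \<omega> = m} = (if m = 0 then 1 else 0)" for m
    by (simp add: thin_sum_def prob_space)
  show "prob {\<omega>\<in>space M. thin_sum t (Suc n) \<omega> = m}
      = (\<Sum>k\<le>m. prob {\<omega>\<in>space M. thin_sum t n \<omega> = k} * zmg_prob \<pi>\<^sub>0 \<mu>\<^sub>\<epsilon> (m - k))" for n m
    using prob_add_eq_convolution[OF indep_thin_sum_G[OF assms]] assms
    by (simp add: thin_sum_def dist_G)
qed (use zmg_prob_0 zmg_prob_1 zmg_prob_Suc_Suc in simp_all)

lemma prob_step_value:
  assumes "t \<ge> 1"
  shows "prob {\<omega>\<in>space M. step_value t n \<omega> = j} = (\<Sum>k\<le>j. pow_coeff \<pi>star a p n k * geo_prob \<mu>\<^sub>\<epsilon> (j - k))"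
  using prob_add_eq_convolution[OF indep_thin_sum_eps[OF assms]] assms
  by (simp add: step_value_def prob_thin_sum dist_eps)

lemma cond_prob_X_Suc:
  "cond_prob M (\<lambda>\<omega>. X (Suc s) \<omega> = j) (\<lambda>\<omega>. X s \<omega> = i) = prob {\<omega>\<in>space M. step_value (Suc s) i \<omega> = j}"
proof -
  have "{\<omega>\<in>space M. X (Suc s) \<omega> = j \<and> X s \<omega> = i} = {\<omega>\<in>space M. X s \<omega> \<in> {i} \<and> step_value (Suc s) i \<omega> \<in> {j}}"
    using X_Suc_eq_step_value by auto
  then have "prob {\<omega>\<in>space M. X (Suc s) \<omega> = j \<and> X s \<omega> = i}
      = prob {\<omega>\<in>space M. X s \<omega> = i} * prob {\<omega>\<in>space M. step_value (Suc s) i \<omega> = j}"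
    using prob_indep_random_variable[OF indep_X_step_value, of "{i}" "{j}"] by simp
  then show ?thesis
    using prob_X_pos[of s i] unfolding cond_prob_def by simp
qed

lemma transition_prob_0:
  "cond_prob M (\<lambda>\<omega>. X (Suc s) \<omega> = j) (\<lambda>\<omega>. X s \<omega> = 0) = geo_prob \<mu>\<^sub>\<epsilon> j"
  using cond_prob_X_Suc dist_eps by (simp add: step_value_def thin_sum_def)

lemma transition_prob_pos:
  assumes "i \<ge> 1"
  shows "cond_prob M (\<lambda>\<omega>. X (Suc s) \<omega> = j) (\<lambda>\<omega>. X s \<omega> = i)
    = geo_prob \<mu>\<^sub>\<epsilon> j * (\<pi>star ^ i + (\<Sum>m = 1..j. \<Sum>l = 1..m.
         (1 + 1 / \<mu>\<^sub>\<epsilon>) ^ m * (real ((i + l - 1) choose l) * \<pi>star ^ i * (1 - \<pi>star) ^ l)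
           * (real ((m - 1) choose (l - 1)) * p ^ (m - l) * (1 - p) ^ l)))"
proof -
  have inner: "(\<Sum>l = 1..m. (1 + 1 / \<mu>\<^sub>\<epsilon>) ^ m * (real ((i + l - 1) choose l) * \<pi>star ^ i * (1 - \<pi>star) ^ l)
           * (real ((m - 1) choose (l - 1)) * p ^ (m - l) * (1 - p) ^ l))
      = (1 + 1 / \<mu>\<^sub>\<epsilon>) ^ m * pow_coeff \<pi>star a p i m" if "m \<in> {1..j}" for m
  proof -
    have "1 \<le> m" using that by simp
    then show ?thesis
      unfolding pow_coeff_eq_sum[OF \<open>1 \<le> m\<close>] sum_distrib_left a_def power_mult_distrib
      by (intro sum.cong refl) (simp add: algebra_simps)
  qed
  have "geo_prob \<mu>\<^sub>\<epsilon> j * (\<pi>star ^ i + (\<Sum>m = 1..j. (1 + 1 / \<mu>\<^sub>\<epsilon>) ^ m * pow_coeff \<pi>star a p i m))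
      = pow_coeff \<pi>star a p i 0 * geo_prob \<mu>\<^sub>\<epsilon> (j - 0)
        + (\<Sum>m = 1..j. pow_coeff \<pi>star a p i m * geo_prob \<mu>\<^sub>\<epsilon> (j - m))"
    by (simp add: distrib_left sum_distrib_left geo_prob_mult_power[OF mu_eps_pos, symmetric] algebra_simps)
  also have "\<dots> = (\<Sum>m\<le>j. pow_coeff \<pi>star a p i m * geo_prob \<mu>\<^sub>\<epsilon> (j - m))"
    by (simp add: atMost_atLeast0 sum.atLeast_Suc_atMost)
  finally show ?thesis
    using cond_prob_X_Suc prob_step_value inner by simp
qed

lemma moments_G:
  assumes "t \<ge> 1" "i \<ge> 1"
  shows "has_mean_variance (\<lambda>\<omega>. real (G t i \<omega>)) \<alpha> (\<alpha> * (1 + 2 * \<mu>\<^sub>\<epsilon> - \<alpha>))"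
proof -
  have mean: "(1 - \<pi>\<^sub>0) * \<mu>\<^sub>\<epsilon> = \<alpha>" unfolding pi0_def using mu_eps_pos by (simp add: algebra_simps)
  have "(\<lambda>k. real k * prob {\<omega>\<in>space M. G t i \<omega> = k}) sums \<alpha>"
    using zmg_prob_sums_mean[OF mu_eps_pos, of \<pi>\<^sub>0] assms by (simp add: dist_G mean)
  moreover have "(\<lambda>k. (real k)\<^sup>2 * prob {\<omega>\<in>space M. G t i \<omega> = k}) sums (\<alpha> * (1 + 2 * \<mu>\<^sub>\<epsilon>))"
    using zmg_prob_sums_second_moment[OF mu_eps_pos, of \<pi>\<^sub>0, unfolded mult.assoc[symmetric] mean] assms
    by (simp add: dist_G)
  ultimately show ?thesis
    using has_mean_variance_nat_rv[OF rv_G] by (simp add: power2_eq_square algebra_simps)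
qed

lemma moments_eps:
  assumes "t \<ge> 1"
  shows "has_mean_variance (\<lambda>\<omega>. real (eps t \<omega>)) \<mu>\<^sub>\<epsilon> (\<mu>\<^sub>\<epsilon> * (1 + \<mu>\<^sub>\<epsilon>))"
proof -
  have "(\<lambda>k. real k * prob {\<omega>\<in>space M. eps t \<omega> = k}) sums \<mu>\<^sub>\<epsilon>"
    and "(\<lambda>k. (real k)\<^sup>2 * prob {\<omega>\<in>space M. eps t \<omega> = k}) sums (\<mu>\<^sub>\<epsilon> * (1 + 2 * \<mu>\<^sub>\<epsilon>))"
    using geo_prob_sums_mean[OF mu_eps_pos] geo_prob_sums_second_moment[OF mu_eps_pos] assms
    by (simp_all add: dist_eps)
  from has_mean_variance_nat_rv[OF rv_eps this] show ?thesis
    by (simp add: power2_eq_square algebra_simps)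
qed

lemma moments_X: "has_mean_variance (\<lambda>\<omega>. real (X t \<omega>)) \<mu> (\<mu> * (1 + \<mu>))"
proof -
  have "(\<lambda>k. real k * prob {\<omega>\<in>space M. X t \<omega> = k}) sums \<mu>"
    and "(\<lambda>k. (real k)\<^sup>2 * prob {\<omega>\<in>space M. X t \<omega> = k}) sums (\<mu> * (1 + 2 * \<mu>))"
    using geo_prob_sums_mean[OF mu_pos] geo_prob_sums_second_moment[OF mu_pos]
    by (simp_all add: dist_X)
  from has_mean_variance_nat_rv[OF rv_X this] show ?thesis
    by (simp add: power2_eq_square algebra_simps)
qed

lemma moments_thin_sum:
  assumes "t \<ge> 1"
  shows "has_mean_variance (\<lambda>\<omega>. real (thin_sum t n \<omega>)) (n * \<alpha>) (n * (\<alpha> * (1 + 2 * \<mu>\<^sub>\<epsilon> - \<alpha>)))"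
proof (induction n)
  case 0
  then show ?case by (simp add: has_mean_variance_def thin_sum_def prob_space)
next
  case (Suc n)
  have "indep_var borel (\<lambda>\<omega>. real (thin_sum t n \<omega>)) borel (\<lambda>\<omega>. real (G t (Suc n) \<omega>))"
    using indep_var_compose[OF indep_thin_sum_G[OF assms], of real borel real borel] by (simp add: comp_def)
  from has_mean_variance_add_indep[OF this Suc.IH moments_G[OF assms]] show ?case
    by (simp add: thin_sum_def algebra_simps)
qed

lemma moments_step_value:
  assumes "t \<ge> 1"
  shows "has_mean_variance (\<lambda>\<omega>. real (step_value t n \<omega>))
           (n * \<alpha> + \<mu>\<^sub>\<epsilon>) (n * (\<alpha> * (1 + 2 * \<mu>\<^sub>\<epsilon> - \<alpha>)) + \<mu>\<^sub>\<epsilon> * (1 + \<mu>\<^sub>\<epsilon>))"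
proof -
  have "indep_var borel (\<lambda>\<omega>. real (thin_sum t n \<omega>)) borel (\<lambda>\<omega>. real (eps t \<omega>))"
    using indep_var_compose[OF indep_thin_sum_eps[OF assms], of real borel real borel] by (simp add: comp_def)
  from has_mean_variance_add_indep[OF this moments_thin_sum[OF assms] moments_eps[OF assms]]
  show ?thesis by (simp add: step_value_def)
qed

lemma cond_expect_X_Suc:
  "cond_expect_at M (\<lambda>\<omega>. real (X (Suc t) \<omega>)) (X t) i = i * \<alpha> + \<mu>\<^sub>\<epsilon>"
proof -
  note T = has_mean_varianceD[OF moments_step_value[of "Suc t" i]]
  have "cond_expect_at M (\<lambda>\<omega>. real (X (Suc t) \<omega>)) (X t) i = expectation (\<lambda>\<omega>. real (step_value (Suc t) i \<omega>))"
    using T(1) prob_X_pos[of t i] X_Suc_eq_step_value by (intro cond_expect_at_indep[OF indep_X_step_value]) auto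
  then show ?thesis using T(3) by simp
qed

lemma cond_var_X_Suc:
  "cond_var_at M (\<lambda>\<omega>. real (X (Suc t) \<omega>)) (X t) i
     = i * (\<alpha> * (1 + 2 * \<mu>\<^sub>\<epsilon> - \<alpha>)) + \<mu>\<^sub>\<epsilon> * (1 + \<mu>\<^sub>\<epsilon>)"
proof -
  note T = has_mean_varianceD[OF moments_step_value[of "Suc t" i]]
  have "integrable M (\<lambda>\<omega>. (real (step_value (Suc t) i \<omega>) - (i * \<alpha> + \<mu>\<^sub>\<epsilon>))\<^sup>2)"
    using T(1,2) by (simp add: power2_diff)
  then have "cond_expect_at M (\<lambda>\<omega>. (real (X (Suc t) \<omega>) - (i * \<alpha> + \<mu>\<^sub>\<epsilon>))\<^sup>2) (X t) i
      = expectation (\<lambda>\<omega>. (real (step_value (Suc t) i \<omega>) - (i * \<alpha> + \<mu>\<^sub>\<epsilon>))\<^sup>2)"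
    using prob_X_pos[of t i] X_Suc_eq_step_value by (intro cond_expect_at_indep[OF indep_X_step_value]) auto
  then show ?thesis
    unfolding cond_var_at_def cond_expect_X_Suc using T(4) by simp
qed

lemma integral_X_Suc_mult_X:
  assumes "t \<le> s" and int: "integrable M (\<lambda>\<omega>. real (X s \<omega>) * real (X t \<omega>))"
  shows "integrable M (\<lambda>\<omega>. real (X (Suc s) \<omega>) * real (X t \<omega>))"
    and "expectation (\<lambda>\<omega>. real (X (Suc s) \<omega>) * real (X t \<omega>))
           = \<alpha> * expectation (\<lambda>\<omega>. real (X s \<omega>) * real (X t \<omega>)) + \<mu>\<^sub>\<epsilon> * \<mu>"
proof -
  note T = has_mean_varianceD[OF moments_step_value[of "Suc s"]]
  note Z = has_mean_varianceD[OF moments_X[of t]]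
  have "integrable M (\<lambda>\<omega>. (real (X s \<omega>) * \<alpha> + \<mu>\<^sub>\<epsilon>) * real (X t \<omega>))"
    using int Z(1) by (simp add: algebra_simps)
  note mix = integral_mixture_indep[OF rv_X, of "\<lambda>i \<omega>. real (step_value (Suc s) i \<omega>)" "\<lambda>i. i * \<alpha> + \<mu>\<^sub>\<epsilon>",
      OF T(1) _ T(3) Z(1) _ indep_X_indicator_step_value[OF assms(1)] this]
  have eq: "real (step_value (Suc s) (X s \<omega>) \<omega>) * real (X t \<omega>) = real (X (Suc s) \<omega>) * real (X t \<omega>)"
    if "\<omega> \<in> space M" for \<omega>
    using X_Suc_eq_step_value[OF that] by simp
  show "integrable M (\<lambda>\<omega>. real (X (Suc s) \<omega>) * real (X t \<omega>))"
  proof -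
    have "integrable M (\<lambda>\<omega>. real (step_value (Suc s) (X s \<omega>) \<omega>) * real (X t \<omega>))
        = integrable M (\<lambda>\<omega>. real (X (Suc s) \<omega>) * real (X t \<omega>))"
      by (intro Bochner_Integration.integrable_cong) (simp_all add: eq)
    then show ?thesis using mix(1) by simp
  qed
  have "expectation (\<lambda>\<omega>. real (X (Suc s) \<omega>) * real (X t \<omega>))
      = expectation (\<lambda>\<omega>. (real (X s \<omega>) * \<alpha> + \<mu>\<^sub>\<epsilon>) * real (X t \<omega>))"
    using mix(2) eq by (simp cong: Bochner_Integration.integral_cong)
  also have "\<dots> = \<alpha> * expectation (\<lambda>\<omega>. real (X s \<omega>) * real (X t \<omega>)) + \<mu>\<^sub>\<epsilon> * \<mu>"
    using int Z(1,3) by (simp add: algebra_simps)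
  finally show "expectation (\<lambda>\<omega>. real (X (Suc s) \<omega>) * real (X t \<omega>))
      = \<alpha> * expectation (\<lambda>\<omega>. real (X s \<omega>) * real (X t \<omega>)) + \<mu>\<^sub>\<epsilon> * \<mu>" .
qed

lemma integral_X_mult_X:
  "integrable M (\<lambda>\<omega>. real (X (t + h) \<omega>) * real (X t \<omega>))
   \<and> expectation (\<lambda>\<omega>. real (X (t + h) \<omega>) * real (X t \<omega>)) = \<alpha> ^ h * (\<mu> * (1 + \<mu>)) + \<mu>\<^sup>2"
proof (induction h)
  case 0
  note X = has_mean_varianceD[OF moments_X[of t]]
  have "expectation (\<lambda>\<omega>. (real (X t \<omega>))\<^sup>2) = \<mu> * (1 + \<mu>) + \<mu>\<^sup>2"
    using variance_eq[of "\<lambda>\<omega>. real (X t \<omega>)"] X by simp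
  then show ?case using X(2) by (simp add: power2_eq_square)
next
  case (Suc h)
  then show ?case
    using integral_X_Suc_mult_X[of t "t + h"] unfolding mu_eps_def
    by (simp add: power2_eq_square algebra_simps)
qed

lemma correlation_X: "correlation M (\<lambda>\<omega>. real (X (t + h) \<omega>)) (\<lambda>\<omega>. real (X t \<omega>)) = \<alpha> ^ h"
proof -
  have cov: "covariance M (\<lambda>\<omega>. real (X (s + k) \<omega>)) (\<lambda>\<omega>. real (X s \<omega>)) = \<alpha> ^ k * (\<mu> * (1 + \<mu>))" for s k
    using covariance_eq integral_X_mult_X[of s k] has_mean_varianceD[OF moments_X]
    by (simp add: power2_eq_square)
  show ?thesis
    using cov[of t h] cov[of t 0] cov[of "t + h" 0] mu_pos unfolding correlation_def by simp
qed

end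

theorem proposition6:
  fixes M :: "'a measure"
    and X :: "nat \<Rightarrow> 'a \<Rightarrow> nat"
    and eps :: "nat \<Rightarrow> 'a \<Rightarrow> nat"
    and G :: "nat \<Rightarrow> nat \<Rightarrow> 'a \<Rightarrow> nat"
    and \<mu> \<alpha> :: real
  defines "\<mu>\<^sub>\<epsilon> \<equiv> (1 - \<alpha>) * \<mu>"
  defines "\<pi>\<^sub>0 \<equiv> 1 - \<alpha> / \<mu>\<^sub>\<epsilon>"
  defines "\<sigma>\<epsilon>2 \<equiv> \<mu>\<^sub>\<epsilon> * (1 + \<mu>\<^sub>\<epsilon>)"
  defines "\<pi>star \<equiv> 1 - \<alpha> / (1 + \<mu>\<^sub>\<epsilon>)"
  defines "p \<equiv> (\<mu>\<^sub>\<epsilon> - \<alpha>) / (1 + \<mu>\<^sub>\<epsilon> - \<alpha>)"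
  defines "A \<equiv> (\<lambda>l i. real ((i + l - 1) choose l) * \<pi>star ^ i * (1 - \<pi>star) ^ l)"
  defines "B \<equiv> (\<lambda>l m. real ((m - 1) choose (l - 1)) * p ^ (m - l) * (1 - p) ^ l)"
  assumes M: "prob_space M"
    and mu_pos: "\<mu> > 0"
    and alpha_pos: "0 < \<alpha>" and alpha_bound: "\<alpha> < \<mu> / (1 + \<mu>)"
    and rv_X: "\<And>t. X t \<in> measurable M (count_space UNIV)"
    and rv_eps: "\<And>t. eps t \<in> measurable M (count_space UNIV)"
    and rv_G: "\<And>t i. G t i \<in> measurable M (count_space UNIV)"
    and indep: "prob_space.indep_vars M (\<lambda>_. count_space UNIV) (inar_vars X eps G) inar_index_set"
    and dist_eps: "\<And>t k. t \<ge> 1 \<Longrightarrow> measure M {\<omega>\<in>space M. eps t \<omega> = k} = geo_prob \<mu>\<^sub>\<epsilon> k"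
    and dist_G: "\<And>t i k. t \<ge> 1 \<Longrightarrow> i \<ge> 1 \<Longrightarrow>
                   measure M {\<omega>\<in>space M. G t i \<omega> = k} = zmg_prob \<pi>\<^sub>0 \<mu>\<^sub>\<epsilon> k"
    and recursion: "\<And>t \<omega>. t \<ge> 1 \<Longrightarrow> \<omega> \<in> space M \<Longrightarrow>
                   X t \<omega> = (\<Sum>i = 1..X (t - 1) \<omega>. G t i \<omega>) + eps t \<omega>"
    and dist_X: "\<And>t k. measure M {\<omega>\<in>space M. X t \<omega> = k} = geo_prob \<mu> k"
  shows
    "(\<forall>t\<ge>1. \<forall>j.
        cond_prob M (\<lambda>\<omega>. X t \<omega> = j) (\<lambda>\<omega>. X (t - 1) \<omega> = 0) = geo_prob \<mu>\<^sub>\<epsilon> j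
      \<and> (\<forall>i\<ge>1. cond_prob M (\<lambda>\<omega>. X t \<omega> = j) (\<lambda>\<omega>. X (t - 1) \<omega> = i)
            = geo_prob \<mu>\<^sub>\<epsilon> j * (\<pi>star ^ i + (\<Sum>m = 1..j. \<Sum>l = 1..m.
                 (1 + 1 / \<mu>\<^sub>\<epsilon>) ^ m * A l i * B l m))))
   \<and> (\<forall>t i. cond_expect_at M (\<lambda>\<omega>. real (X (t + 1) \<omega>)) (X t) i = \<alpha> * real i + (1 - \<alpha>) * \<mu>)
   \<and> (\<forall>t i. cond_var_at M (\<lambda>\<omega>. real (X (t + 1) \<omega>)) (X t) i
            = (1 + 2 * \<mu>) * (1 - \<alpha>) * \<alpha> * real i + \<sigma>\<epsilon>2)
   \<and> (\<forall>t h. correlation M (\<lambda>\<omega>. real (X (t + h) \<omega>)) (\<lambda>\<omega>. real (X t \<omega>)) = \<alpha> ^ h)"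
proof -
  interpret g: geo_inar M X eps G \<mu> \<alpha> \<mu>\<^sub>\<epsilon> \<pi>\<^sub>0
    by (intro geo_inar.intro[OF M] geo_inar_axioms.intro)
      (simp_all add: mu_pos alpha_pos alpha_bound rv_X rv_eps rv_G indep dist_eps dist_G recursion dist_X
        \<mu>\<^sub>\<epsilon>_def \<pi>\<^sub>0_def)
  have A_eq: "A l i = real ((i + l - 1) choose l) * g.\<pi>star ^ i * (1 - g.\<pi>star) ^ l" for l i
    by (simp add: A_def \<pi>star_def g.\<pi>star_def)
  have B_eq: "B l m = real ((m - 1) choose (l - 1)) * g.p ^ (m - l) * (1 - g.p) ^ l" for l m
    by (simp add: B_def p_def g.p_def)
  have transitions: "cond_prob M (\<lambda>\<omega>. X t \<omega> = j) (\<lambda>\<omega>. X (t - 1) \<omega> = 0) = geo_prob \<mu>\<^sub>\<epsilon> j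
      \<and> (\<forall>i\<ge>1. cond_prob M (\<lambda>\<omega>. X t \<omega> = j) (\<lambda>\<omega>. X (t - 1) \<omega> = i)
            = geo_prob \<mu>\<^sub>\<epsilon> j * (\<pi>star ^ i + (\<Sum>m = 1..j. \<Sum>l = 1..m. (1 + 1 / \<mu>\<^sub>\<epsilon>) ^ m * A l i * B l m)))"
    if t: "t \<ge> 1" for t j
  proof -
    obtain s where "t = Suc s" using t by (cases t) auto
    then show ?thesis
      using g.transition_prob_0 g.transition_prob_pos
      by (simp add: A_eq B_eq \<pi>star_def g.\<pi>star_def mult.assoc)
  qed
  show ?thesis
    using transitions g.cond_expect_X_Suc g.cond_var_X_Suc g.correlation_X
    by (simp add: \<mu>\<^sub>\<epsilon>_def \<sigma>\<epsilon>2_def algebra_simps)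
qed

end
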